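(* In the polarized setting below, assume $w\ge2$ and keep the operators $D^0(t)$, $D^{\pm}_p(t)$ ($t\in H^0$) defined below. For $(z,\mathbf x,\mathbf y)\in\mathbf C\times\mathbf C^{w-1}\times\mathbf C^{w-1}$, $\mathbf x=(x_0,\dots,x_{w-2})$, $\mathbf y=(y_0,\dots,y_{w-2})$, define for $t\in H^0$ the endomorphism of $V_w$ $$D_{(z,\mathbf x,\mathbf y)}(t)=z\,D^0(t)+\sum_{p=0}^{w-2}x_p\,D^+_p(t)\pi_p+\sum_{p=0}^{w-2}y_p\,D^-_{p+1}(t)\pi_{p+1},$$ where $\pi_p:V_w\to H^p$ is the projection. If $x_py_p=z^2$ for all $p=0,\dots,w-2$, then $D_{(z,\mathbf x,\mathbf y)}(t)D_{(z,\mathbf x,\mathbf y)}(t')=D_{(z,\mathbf x,\mathbf y)}(t')D_{(z,\mathbf x,\mathbf y)}(t)$ for all $t,t'\in H^0$; i.e. the morphism $D_{(z,\mathbf x,\mathbf y)}:V_w\to(H^0)^*\otimes V_w$ satisfies $D_{(z,\mathbf x,\mathbf y)}\wedge D_{(z,\mathbf x,\mathbf y)}=0$ (it is a Higgs morphism). Thus the affine variety $\hat H=\{(z,\mathbf x,\mathbf y): x_py_p=z^2,\ p=0,\dots,w-2\}$ parametrizes such Higgs morphisms.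
   Context: Polarized setting. Let $X$ be a smooth complex projective variety of dimension $n\ge2$ with canonical divisor $K_X$, $\mathcal E$ a rank $n$ holomorphic vector bundle with $\mathcal O_X(L)=\det\mathcal E$ and $H^i(\mathcal O_X(-L))=0$ for $i\le n-1$. Let $e\in H^0(\mathcal E)$ be a section whose zero scheme $Z=Z_e$ is a finite set of $d$ distinct reduced points. Put $A=H^0(\mathcal O_Z)$ and $E_Z=\mathrm{Ext}^{n-1}(\mathcal I_Z(L),\mathcal O_X)$, viewed via Serre duality $E_Z\cong H^1(\mathcal I_Z(L+K_X))^*$ and dualizing the surjection $H^0(\mathcal O_Z(L+K_X))\to H^1(\mathcal I_Z(L+K_X))$ as a subspace of $H^0(\mathcal O_Z(L+K_X))^*\cong H^0(\omega_Z\otimes\mathcal O_X(-L-K_X))$, sections of an invertible sheaf on $Z$. An element $\alpha\in E_Z$ is regular if $f\mapsto f\alpha$ is an isomorphism $A\to H^0(\mathcal O_Z(L+K_X))^*$ (i.e. $\alpha$ vanishes at no point of $Z$). For regular $\alpha$ put $V_1=\{\beta/\alpha:\beta\in E_Z\}\subset A$ (it contains $1$), let $V_k$ be the span of all products of $k$ elements of $V_1$ (so $V_1\subset V_2\subset\cdots$), $V_0=0$, and let $w\ge1$ be the least integer with $V_k=V_w$ for all $k\ge w$. Let $q(f,g)=\sum_{z\in Z}f(z)g(z)$ be the trace form on $A$; $\alpha$ is polarizing if it is regular and $q|_{V_k}$ is non-degenerate for all $k\ge1$. For polarizing $\alpha$ define $H^p=V_p^{\perp}\cap V_{p+1}$ for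 $0\le p\le w-1$ and $H^w=V_w^{\perp}$, orthogonal complements taken in $A$ with respect to $q$. Then $A=\bigoplus_{p=0}^wH^p$, $H^0=V_1$ and $V_w=\bigoplus_{p=0}^{w-1}H^p$. For $t\in H^0$, multiplication by $t$ preserves $V_w$ and maps $H^p$ into $H^{p-1}\oplus H^p\oplus H^{p+1}$; $D^-_p(t):H^p\to H^{p-1}$, $D^0_p(t):H^p\to H^p$, $D^+_p(t):H^p\to H^{p+1}$ denote the components of multiplication by $t$ restricted to $H^p$, and $D^0(t)=\sum_{p=0}^{w-1}D^0_p(t)\pi_p$. *)

theory Defs
  imports Complex_Main "HOL-Library.Function_Algebras"
begin

text \<open>The finite set Z of d reduced points
is modelled by a finite type 'z; the algebra A = H^0(O_Z) is the algebra of functions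
'z => complex (pointwise operations). The subspace V_1 = {beta/alpha} is a parameter.\<close>

definition cscale :: "complex \<Rightarrow> ('z \<Rightarrow> complex) \<Rightarrow> ('z \<Rightarrow> complex)" where
  "cscale c f = (\<lambda>z. c * f z)"

definition cspan :: "('z \<Rightarrow> complex) set \<Rightarrow> ('z \<Rightarrow> complex) set" where
  "cspan S = module.span cscale S"

definition trq :: "('z::finite \<Rightarrow> complex) \<Rightarrow> ('z \<Rightarrow> complex) \<Rightarrow> complex" where
  "trq f g = (\<Sum>z\<in>UNIV. f z * g z)"

definition qperp :: "('z::finite \<Rightarrow> complex) set \<Rightarrow> ('z \<Rightarrow> complex) set" where
  "qperp S = {f. \<forall>g\<in>S. trq f g = 0}"

definition nondeg_on :: "('z::finite \<Rightarrow> complex) set \<Rightarrow> bool" where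
  "nondeg_on S \<longleftrightarrow> (\<forall>f\<in>S. (\<forall>g\<in>S. trq f g = 0) \<longrightarrow> f = 0)"

definition Vk :: "('z \<Rightarrow> complex) set \<Rightarrow> nat \<Rightarrow> ('z \<Rightarrow> complex) set" where
  "Vk V1 k = (if k = 0 then {0}
      else cspan {prod_list fs | fs. length fs = k \<and> set fs \<subseteq> V1})"

definition wdeg :: "('z \<Rightarrow> complex) set \<Rightarrow> nat" where
  "wdeg V1 = (LEAST w. 1 \<le> w \<and> (\<forall>k\<ge>w. Vk V1 k = Vk V1 w))"

definition polarizing :: "('z::finite \<Rightarrow> complex) set \<Rightarrow> bool" where
  "polarizing V1 \<longleftrightarrow> (\<forall>k\<ge>1. nondeg_on (Vk V1 k))"

definition Hp :: "('z::finite \<Rightarrow> complex) set \<Rightarrow> nat \<Rightarrow> ('z \<Rightarrow> complex) set" where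
  "Hp V1 p = (if p < wdeg V1 then qperp (Vk V1 p) \<inter> Vk V1 (Suc p)
              else qperp (Vk V1 (wdeg V1)))"

definition proj :: "('z::finite \<Rightarrow> complex) set \<Rightarrow> nat \<Rightarrow> ('z \<Rightarrow> complex) \<Rightarrow> ('z \<Rightarrow> complex)" where
  "proj V1 p f = (THE h. \<exists>g. (\<forall>r\<le>wdeg V1. g r \<in> Hp V1 r) \<and>
                        f = (\<Sum>r\<le>wdeg V1. g r) \<and> h = g p)"

definition D0 :: "('z::finite \<Rightarrow> complex) set \<Rightarrow> ('z \<Rightarrow> complex) \<Rightarrow> ('z \<Rightarrow> complex) \<Rightarrow> ('z \<Rightarrow> complex)" where
  "D0 V1 t f = (\<Sum>p<wdeg V1. proj V1 p (t * proj V1 p f))"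

definition Dplus :: "('z::finite \<Rightarrow> complex) set \<Rightarrow> nat \<Rightarrow> ('z \<Rightarrow> complex) \<Rightarrow> ('z \<Rightarrow> complex) \<Rightarrow> ('z \<Rightarrow> complex)" where
  "Dplus V1 p t f = proj V1 (Suc p) (t * proj V1 p f)"

definition Dminus :: "('z::finite \<Rightarrow> complex) set \<Rightarrow> nat \<Rightarrow> ('z \<Rightarrow> complex) \<Rightarrow> ('z \<Rightarrow> complex) \<Rightarrow> ('z \<Rightarrow> complex)" where
  "Dminus V1 p t f = proj V1 (p - 1) (t * proj V1 p f)"

definition Dzxy :: "('z::finite \<Rightarrow> complex) set \<Rightarrow> complex \<Rightarrow> (nat \<Rightarrow> complex) \<Rightarrow> (nat \<Rightarrow> complex)
    \<Rightarrow> ('z \<Rightarrow> complex) \<Rightarrow> ('z \<Rightarrow> complex) \<Rightarrow> ('z \<Rightarrow> complex)" where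
  "Dzxy V1 z x y t f =
     cscale z (D0 V1 t f)
     + (\<Sum>p<wdeg V1 - 1. cscale (x p) (Dplus V1 p t f))
     + (\<Sum>p<wdeg V1 - 1. cscale (y p) (Dminus V1 (Suc p) t f))"

end

theory Submission imports Defs begin

(* Multiplication by t \<in> V_1 = H^0 raises the filtration degree by at most one, and H^p is
   orthogonal to V_p, so in the grading A = H^0 + ... + H^w multiplication by t is tridiagonal:
   it maps H^p into H^(p-1) + H^p + H^(p+1).  D(t) weights the diagonal blocks with z, the blocks
   H^p \<rightarrow> H^(p+1) with x_p and the blocks H^(p+1) \<rightarrow> H^p with y_p.  In D(t) D(t') the block
   H^p \<rightarrow> H^q is a sum over intermediate degrees r, and x_p y_p = z^2 makes its weight
   independent of r (e.g. for q = p the paths through p - 1, p and p + 1 all have weight z^2).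
   Hence that block is a scalar, depending only on p and q, times the (q, p) block of
   multiplication by t t' = t' t, which is symmetric in t and t'. *)

section \<open>The algebra of functions on a finite set\<close>

interpretation cvs: vector_space cscale
  by unfold_locales (auto simp: cscale_def fun_eq_iff algebra_simps)

definition point_basis :: "('z::finite \<Rightarrow> complex) set" where
  "point_basis = range (\<lambda>a z. if z = a then 1 else 0)"

lemma sum_apply: "(sum f A) x = (\<Sum>a\<in>A. f a x)"
  by (induction A rule: infinite_finite_induct) auto

lemma sum_lessThan_if_Suc_less: "(\<Sum>p<(n::nat). if Suc p < n then F p else 0) = (\<Sum>p<n - 1. F p)"
proof (cases n)
  case (Suc m)
  then have "(\<Sum>p<n. if Suc p < n then F p else 0) = (\<Sum>p<m. if Suc p < n then F p else 0)"
    by simp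
  also have "\<dots> = (\<Sum>p<m. F p)" using Suc by (intro sum.cong) auto
  finally show ?thesis using Suc by simp
qed simp

lemma sum_point_basis_expansion:
  "(\<Sum>a\<in>UNIV. cscale (f a) (\<lambda>z. if z = a then 1 else 0)) = (f::'z::finite \<Rightarrow> complex)"
  by (auto simp: fun_eq_iff cscale_def sum_apply if_distrib cong: if_cong)

lemma span_point_basis: "cvs.span (point_basis::('z::finite \<Rightarrow> complex) set) = UNIV"
proof -
  have "f \<in> cvs.span point_basis" for f :: "'z \<Rightarrow> complex"
  proof -
    have "(\<Sum>a\<in>UNIV. cscale (f a) (\<lambda>z. if z = a then 1 else 0)) \<in> cvs.span point_basis"
      by (intro cvs.span_sum cvs.span_scale cvs.span_base) (auto simp: point_basis_def)
    then show ?thesis by (simp add: sum_point_basis_expansion)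
  qed
  then show ?thesis by auto
qed

lemma independent_point_basis: "cvs.independent (point_basis::('z::finite \<Rightarrow> complex) set)"
  unfolding cvs.independent_explicit_module
proof (intro allI impI)
  fix T u and v :: "'z \<Rightarrow> complex"
  assume "finite T" and T: "T \<subseteq> point_basis" and comb: "(\<Sum>v\<in>T. cscale (u v) v) = 0" and v: "v \<in> T"
  obtain a where a: "v = (\<lambda>z. if z = a then 1 else 0)" using T v by (auto simp: point_basis_def)
  have "cscale (u v') v' a = (if v' = v then u v else 0)" if v': "v' \<in> T" for v'
  proof -
    obtain b where b: "v' = (\<lambda>z. if z = b then 1 else 0)" using T v' by (auto simp: point_basis_def)
    have "v' = v \<longleftrightarrow> b = a" unfolding a b by (metis zero_neq_one)
    then show ?thesis using a b by (auto simp: cscale_def)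
  qed
  then have "(\<Sum>v\<in>T. cscale (u v) v) a = (\<Sum>v'\<in>T. if v' = v then u v else 0)"
    unfolding sum_apply by (rule sum.cong[OF refl])
  with comb v \<open>finite T\<close> show "u v = 0" by simp
qed

interpretation cvs: finite_dimensional_vector_space cscale "point_basis::('z::finite \<Rightarrow> complex) set"
proof
  show "finite (point_basis::('z \<Rightarrow> complex) set)" by (simp add: point_basis_def)
qed (simp_all add: span_point_basis independent_point_basis)

interpretation cvs: finite_dimensional_vector_space_pair_1 cscale
    "point_basis::('z::finite \<Rightarrow> complex) set" cscale
  by unfold_locales

lemma mult_cscale: "t * cscale c g = cscale c (t * g)"
  by (simp add: cscale_def fun_eq_iff)

lemma trq_sym: "trq f g = trq g f"
  by (simp add: trq_def mult.commute)

lemma trq_add_left: "trq (f + g) h = trq f h + trq g h"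
  and trq_add_right: "trq h (f + g) = trq h f + trq h g"
  and trq_diff_left: "trq (f - g) h = trq f h - trq g h"
  and trq_diff_right: "trq h (f - g) = trq h f - trq h g"
  and trq_scale_left: "trq (cscale c f) h = c * trq f h"
  and trq_scale_right: "trq h (cscale c f) = c * trq h f"
  by (simp_all add: trq_def cscale_def algebra_simps sum.distrib sum_subtractf sum_distrib_left)

lemma trq_zero_left [simp]: "trq 0 h = 0"
  and trq_zero_right [simp]: "trq h 0 = 0"
  by (simp_all add: trq_def)

lemma trq_sum_left: "trq (sum F A) h = (\<Sum>a\<in>A. trq (F a) h)"
  by (simp add: trq_def sum_apply sum_distrib_right sum.swap[of _ A])

lemma trq_mult_left: "trq (t * f) g = trq f (t * g)"
  by (simp add: trq_def algebra_simps)

lemma trq_nondegenerate: assumes "\<And>g. trq f g = 0" shows "f = 0"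
proof
  fix a
  have "trq f (\<lambda>z. if z = a then 1 else 0) = f a"
    by (simp add: trq_def if_distrib cong: if_cong)
  then show "f a = 0 a" using assms by simp
qed

lemma trq_span_right:
  assumes "\<And>b. b \<in> S \<Longrightarrow> trq f b = 0" and "g \<in> cvs.span S"
  shows "trq f g = 0"
  using assms(2)
proof (induction rule: cvs.span_induct)
  case base
  show ?case unfolding cvs.subspace_def by (auto simp: trq_add_right trq_scale_right)
qed (use assms(1) in simp)

lemma qperp_subspace: "cvs.subspace (qperp S)"
  unfolding cvs.subspace_def qperp_def by (auto simp: trq_add_left trq_scale_left)

(* With a basis B of W, the map L g = \<Sum>b\<in>B. trq g b \<cdot> b has kernel qperp W and is injective
   on W; so it maps W onto W, and f - a \<in> qperp W for the a \<in> W with L a = L f. *)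
lemma nondeg_subspace_orth_decomp:
  fixes W :: "('z::finite \<Rightarrow> complex) set"
  assumes sub: "cvs.subspace W" and nd: "nondeg_on W"
  shows "\<exists>a\<in>W. f - a \<in> qperp W"
proof -
  obtain B where B: "finite B" "cvs.independent B" "cvs.span B = W"
    using cvs.basis_subspace_exists[OF sub] by metis
  define L where "L g = (\<Sum>b\<in>B. cscale (trq g b) b)" for g
  have L_diff: "L (g1 - g2) = L g1 - L g2" for g1 g2
    by (simp add: L_def trq_diff_left cvs.scale_left_diff_distrib sum_subtractf)
  have L_linear: "Vector_Spaces.linear cscale cscale L"
    unfolding Vector_Spaces.linear_iff using cvs.vector_space_axioms
    by (simp add: L_def trq_add_left trq_scale_left cvs.scale_left_distrib sum.distrib
        cvs.scale_sum_right)
  have L_in_W: "L g \<in> W" for g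
    unfolding L_def B(3)[symmetric] by (intro cvs.span_sum cvs.span_scale cvs.span_base)
  have L_kernel: "g \<in> qperp W" if "L g = 0" for g
  proof -
    have "trq g b = 0" if "b \<in> B" for b
      using cvs.independentD[OF B(2) B(1) order_refl, of "\<lambda>b. trq g b"] \<open>L g = 0\<close> that
      by (simp add: L_def)
    then show ?thesis using trq_span_right B(3) unfolding qperp_def by blast
  qed
  have span_W: "cvs.span W = W" using sub by (rule cvs.span_eq_iff[THEN iffD2])
  have "inj_on L (cvs.span W)"
  proof (rule inj_onI)
    fix g1 g2 assume g: "g1 \<in> cvs.span W" "g2 \<in> cvs.span W" "L g1 = L g2"
    then have "g1 - g2 \<in> W" using span_W sub cvs.subspace_diff by metis
    moreover have "g1 - g2 \<in> qperp W" using g L_diff L_kernel by simp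
    ultimately have "g1 - g2 = 0" using nd unfolding nondeg_on_def qperp_def by blast
    then show "g1 = g2" by simp
  qed
  then have "cvs.dim (L ` W) = cvs.dim W" using cvs.dim_image_eq[OF L_linear] by blast
  moreover have "cvs.subspace (L ` W)"
    using L_linear sub by (intro module_hom.subspace_image) (simp_all add: module_hom_iff_linear)
  ultimately have "L ` W = W" using cvs.subspace_dim_equal[of "L ` W" W] sub L_in_W by auto
  then obtain a where a: "a \<in> W" "L a = L f" using L_in_W by (metis imageE)
  then have "f - a \<in> qperp W" using L_diff L_kernel by simp
  with a show ?thesis by blast
qed

section \<open>The filtration by the spaces V_k\<close>

definition products :: "('z \<Rightarrow> complex) set \<Rightarrow> nat \<Rightarrow> ('z \<Rightarrow> complex) set" where
  "products V1 k = {prod_list fs | fs. length fs = k \<and> set fs \<subseteq> V1}"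

lemma Vk_Suc: "Vk V1 (Suc k) = cvs.span (products V1 (Suc k))"
  by (simp add: Vk_def products_def cspan_def)

lemma Vk_subspace: "cvs.subspace (Vk V1 k)"
  by (cases k) (simp_all add: Vk_def cspan_def)

lemma span_Vk [simp]: "cvs.span (Vk V1 k) = Vk V1 k"
  using Vk_subspace cvs.span_eq_iff by blast

lemma mult_in_Vk_Suc:
  assumes t: "t \<in> V1" and g: "g \<in> Vk V1 k"
  shows "t * g \<in> Vk V1 (Suc k)"
proof (cases k)
  case 0
  then show ?thesis using g by (simp add: Vk_def cspan_def cvs.span_zero)
next
  case (Suc m)
  from g have "g \<in> cvs.span (products V1 k)" by (simp add: Suc Vk_Suc)
  then show ?thesis
  proof (induction rule: cvs.span_induct)
    case base
    show ?case
      unfolding cvs.subspace_def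
      by (auto simp: distrib_left mult_cscale Vk_subspace cvs.subspace_add cvs.subspace_scale
          cvs.subspace_0[OF Vk_subspace])
  next
    case (step h)
    then obtain fs where "h = prod_list fs" "length fs = k" "set fs \<subseteq> V1"
      by (auto simp: products_def)
    then have "t * h \<in> products V1 (Suc k)"
      using t unfolding products_def by (auto intro!: exI[of _ "t # fs"])
    then show ?case unfolding Vk_Suc by (rule cvs.span_base)
  qed
qed

lemma Vk_one: assumes "cvs.subspace V1" shows "Vk V1 1 = V1"
proof -
  have "products V1 1 = V1"
  proof
    show "products V1 1 \<subseteq> V1" by (auto simp: products_def length_Suc_conv)
    show "V1 \<subseteq> products V1 1" unfolding products_def by (force intro: exI[of _ "[f]" for f])
  qed
  with assms show ?thesis using Vk_Suc[of V1 0] cvs.span_eq_iff by simp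
qed

lemma Vk_mono: assumes "1 \<in> V1" "k \<le> m" shows "Vk V1 k \<subseteq> Vk V1 m"
  using assms(2)
proof (induction m)
  case (Suc m)
  have "Vk V1 m \<subseteq> Vk V1 (Suc m)" using mult_in_Vk_Suc[OF assms(1)] by fastforce
  with Suc show ?case by (cases "k = Suc m") auto
qed simp

lemma Vk_stable_step:
  assumes "1 \<in> V1" and "Vk V1 k = Vk V1 (Suc k)"
  shows "Vk V1 (Suc k) = Vk V1 (Suc (Suc k))"
proof
  have "products V1 (Suc (Suc k)) \<subseteq> Vk V1 (Suc k)"
  proof
    fix h assume "h \<in> products V1 (Suc (Suc k))"
    then obtain gs where gs: "h = prod_list gs" "length gs = Suc (Suc k)" "set gs \<subseteq> V1"
      by (auto simp: products_def)
    then obtain f fs where "gs = f # fs" by (cases gs) auto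
    with gs have h: "h = f * prod_list fs" "f \<in> V1" "length fs = Suc k" "set fs \<subseteq> V1"
      by auto
    then have "prod_list fs \<in> products V1 (Suc k)" unfolding products_def by blast
    then have "prod_list fs \<in> Vk V1 k" unfolding assms(2) Vk_Suc by (rule cvs.span_base)
    then show "h \<in> Vk V1 (Suc k)" using h mult_in_Vk_Suc by blast
  qed
  then show "Vk V1 (Suc (Suc k)) \<subseteq> Vk V1 (Suc k)"
    unfolding Vk_Suc[of V1 "Suc k"] by (rule cvs.span_minimal[OF _ Vk_subspace])
qed (use Vk_mono[OF assms(1)] in simp)

lemma Vk_eventually_stable:
  fixes V1 :: "('z::finite \<Rightarrow> complex) set"
  assumes "1 \<in> V1"
  shows "\<exists>k. Vk V1 k = Vk V1 (Suc k)"
proof (rule ccontr)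
  assume "\<nexists>k. Vk V1 k = Vk V1 (Suc k)"
  then have "Vk V1 k \<subset> Vk V1 (Suc k)" for k
    using Vk_mono[OF assms, of k "Suc k"] by (simp add: psubset_eq)
  then have dim_less: "cvs.dim (Vk V1 k) < cvs.dim (Vk V1 (Suc k))" for k
    using cvs.dim_psubset[of "Vk V1 k" "Vk V1 (Suc k)"] by simp
  have dim_ge: "k \<le> cvs.dim (Vk V1 k)" for k
  proof (induction k)
    case (Suc k)
    with dim_less[of k] show ?case by simp
  qed simp
  define N where "N = cvs.dim (UNIV :: ('z \<Rightarrow> complex) set)"
  have "Suc N \<le> cvs.dim (Vk V1 (Suc N))" by (rule dim_ge)
  also have "\<dots> \<le> N" unfolding N_def by (rule cvs.dim_subset) simp
  finally show False by simp
qed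

lemma Vk_stable_from:
  assumes "1 \<in> V1" "Vk V1 k = Vk V1 (Suc k)" "k \<le> j"
  shows "Vk V1 j = Vk V1 k"
proof -
  have "Vk V1 (k + i) = Vk V1 k \<and> Vk V1 (Suc (k + i)) = Vk V1 k" for i
  proof (induction i)
    case (Suc i)
    then show ?case using Vk_stable_step[OF assms(1), of "k + i"] by simp
  qed (use assms(2) in simp)
  from this[of "j - k"] assms(3) show ?thesis by simp
qed

lemma wdeg_stable:
  fixes V1 :: "('z::finite \<Rightarrow> complex) set"
  assumes "1 \<in> V1"
  shows "1 \<le> wdeg V1" and "wdeg V1 \<le> k \<Longrightarrow> Vk V1 k = Vk V1 (wdeg V1)"
proof -
  obtain m where m: "Vk V1 m = Vk V1 (Suc m)" using Vk_eventually_stable[OF assms] by blast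
  have "\<exists>w. 1 \<le> w \<and> (\<forall>j\<ge>w. Vk V1 j = Vk V1 w)"
  proof (intro exI[of _ "Suc m"] conjI allI impI)
    fix j assume "Suc m \<le> j"
    show "Vk V1 j = Vk V1 (Suc m)"
      using Vk_stable_from[OF assms m Suc_leD[OF \<open>Suc m \<le> j\<close>]] m by (rule trans)
  qed simp
  from LeastI_ex[OF this] show "1 \<le> wdeg V1" "wdeg V1 \<le> k \<Longrightarrow> Vk V1 k = Vk V1 (wdeg V1)"
    unfolding wdeg_def by blast+
qed

definition tridiag_coeff :: "complex \<Rightarrow> (nat \<Rightarrow> complex) \<Rightarrow> (nat \<Rightarrow> complex) \<Rightarrow> nat \<Rightarrow> nat \<Rightarrow> complex" where
  "tridiag_coeff z x y q p =
     (if q = p then z else if q = Suc p then x p else if p = Suc q then y q else 0)"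

(* The weight of the path p \<rightarrow> (q + p) div 2 \<rightarrow> q, an intermediate degree inside the band
   whenever any is. *)
definition two_step_coeff :: "complex \<Rightarrow> (nat \<Rightarrow> complex) \<Rightarrow> (nat \<Rightarrow> complex) \<Rightarrow> nat \<Rightarrow> nat \<Rightarrow> complex" where
  "two_step_coeff z x y q p =
     tridiag_coeff z x y q ((q + p) div 2) * tridiag_coeff z x y ((q + p) div 2) p"

lemma tridiag_coeff_path_indep:
  fixes w :: nat
  assumes hat: "\<forall>p < w - 1. x p * y p = z ^ 2"
    and "q < w" "r < w" "p < w" "q \<le> Suc r" "r \<le> Suc q" "p \<le> Suc r" "r \<le> Suc p"
  shows "tridiag_coeff z x y q r * tridiag_coeff z x y r p = two_step_coeff z x y q p"
proof -
  have "q = r \<or> q = Suc r \<or> r = Suc q" "p = r \<or> p = Suc r \<or> r = Suc p"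
    using assms by linarith+
  then show ?thesis
  proof (elim disjE)
    assume "q = Suc r" "p = Suc r"
    then show ?thesis
      using hat assms by (simp add: two_step_coeff_def tridiag_coeff_def power2_eq_square)
  next
    assume "r = Suc q" "r = Suc p"
    then show ?thesis
      using hat assms by (simp add: two_step_coeff_def tridiag_coeff_def power2_eq_square mult.commute)
  qed (simp_all add: two_step_coeff_def tridiag_coeff_def mult.commute)
qed

section \<open>The orthogonal grading A = H^0 + ... + H^w\<close>

locale polarized =
  fixes V1 :: "('z::finite \<Rightarrow> complex) set"
  assumes subspace_V1: "cvs.subspace V1" and one_in_V1: "1 \<in> V1"
    and polarizing: "polarizing V1"
begin

abbreviation w :: nat where "w \<equiv> wdeg V1"
abbreviation V :: "nat \<Rightarrow> ('z \<Rightarrow> complex) set" where "V k \<equiv> Vk V1 k"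
abbreviation H :: "nat \<Rightarrow> ('z \<Rightarrow> complex) set" where "H p \<equiv> Hp V1 p"
abbreviation pr :: "nat \<Rightarrow> ('z \<Rightarrow> complex) \<Rightarrow> 'z \<Rightarrow> complex" where "pr p f \<equiv> proj V1 p f"

lemma w_ge_1: "1 \<le> w"
  by (rule wdeg_stable(1)[OF one_in_V1])

lemma V_stable: "w \<le> k \<Longrightarrow> V k = V w"
  by (rule wdeg_stable(2)[OF one_in_V1])

lemma V_mono: "k \<le> m \<Longrightarrow> V k \<subseteq> V m"
  by (rule Vk_mono[OF one_in_V1])

lemma nondeg_V: "nondeg_on (V k)"
  using polarizing by (cases k) (auto simp: Vk_def nondeg_on_def polarizing_def)

lemma H_less: "p < w \<Longrightarrow> H p = qperp (V p) \<inter> V (Suc p)"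
  by (simp add: Hp_def)

lemma H_top: "H w = qperp (V w)"
  by (simp add: Hp_def)

lemma H_orth_V: "p \<le> w \<Longrightarrow> H p \<subseteq> qperp (V p)"
  by (cases "p < w") (auto simp: Hp_def)

lemma H_subset_V_Suc: "p < w \<Longrightarrow> H p \<subseteq> V (Suc p)"
  by (simp add: Hp_def)

lemma H_subset_V_top: "p < w \<Longrightarrow> H p \<subseteq> V w"
  using H_subset_V_Suc V_mono[of "Suc p" w] by auto

lemma H_subspace: "cvs.subspace (H p)"
  by (auto simp: Hp_def intro!: cvs.subspace_inter qperp_subspace Vk_subspace)

lemma zero_in_H: "0 \<in> H p"
  using H_subspace cvs.subspace_0 by blast

lemma H0_eq_V1: "H 0 = V1"
  using w_ge_1 Vk_one[OF subspace_V1] by (simp add: H_less Vk_def qperp_def)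

lemma V_Suc_decomp: assumes "p < w" "f \<in> V (Suc p)" shows "\<exists>a\<in>V p. f - a \<in> H p"
proof -
  obtain a where a: "a \<in> V p" "f - a \<in> qperp (V p)"
    using nondeg_subspace_orth_decomp[OF Vk_subspace nondeg_V] by blast
  then have "a \<in> V (Suc p)" using V_mono[of p "Suc p"] by auto
  then have "f - a \<in> V (Suc p)" by (rule cvs.subspace_diff[OF Vk_subspace assms(2)])
  with a assms(1) show ?thesis by (auto simp: H_less)
qed

lemma V_top_decomp: "\<exists>a\<in>V w. f - a \<in> H w"
  using nondeg_subspace_orth_decomp[OF Vk_subspace nondeg_V] unfolding H_top .

lemma V_sum_H_exists: "k \<le> w \<Longrightarrow> f \<in> V k \<Longrightarrow> \<exists>g. (\<forall>r. g r \<in> H r) \<and> f = (\<Sum>r<k. g r)"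
proof (induction k arbitrary: f)
  case 0
  then show ?case using zero_in_H by (auto simp: Vk_def intro!: exI[of _ "\<lambda>_. 0"])
next
  case (Suc k)
  have "k < w" using Suc.prems(1) by simp
  then obtain a where a: "a \<in> V k" "f - a \<in> H k" using V_Suc_decomp Suc.prems(2) by blast
  obtain g where g: "\<forall>r. g r \<in> H r" "a = (\<Sum>r<k. g r)" using Suc.IH[OF _ a(1)] Suc.prems by auto
  have "(\<Sum>r<k. (g(k := f - a)) r) = (\<Sum>r<k. g r)" by (rule sum.cong) auto
  then have "f = (\<Sum>r<Suc k. (g(k := f - a)) r)" using g by simp
  with g a show ?case by (intro exI[of _ "g(k := f - a)"]) auto
qed

lemma sum_H_exists: "\<exists>g. (\<forall>r. g r \<in> H r) \<and> f = (\<Sum>r\<le>w. g r)"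
proof -
  obtain a where a: "a \<in> V w" "f - a \<in> H w" using V_top_decomp by blast
  obtain g where g: "\<forall>r. g r \<in> H r" "a = (\<Sum>r<w. g r)" using V_sum_H_exists[OF order_refl a(1)] by auto
  have "(\<Sum>r<w. (g(w := f - a)) r) = (\<Sum>r<w. g r)" by (rule sum.cong) auto
  then have "f = (\<Sum>r\<le>w. (g(w := f - a)) r)" using g by (simp add: lessThan_Suc_atMost[symmetric])
  with g a show ?thesis by (intro exI[of _ "g(w := f - a)"]) auto
qed

lemma H_orth_less: assumes "r < s" "s \<le> w" "a \<in> H r" "b \<in> H s" shows "trq a b = 0"
proof -
  have "r < w" using assms by simp
  then have "a \<in> V s" using assms H_subset_V_Suc[of r] V_mono[of "Suc r" s] by auto
  moreover have "b \<in> qperp (V s)" using assms H_orth_V by blast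
  ultimately show ?thesis by (simp add: qperp_def trq_sym)
qed

lemma H_orth: assumes "r \<noteq> s" "r \<le> w" "s \<le> w" "a \<in> H r" "b \<in> H s" shows "trq a b = 0"
  using assms H_orth_less[of r s a b] H_orth_less[of s r b a] trq_sym[of a b] by (cases "r < s") auto

(* Elements of V_(p+1), resp. of A when p = w, split as V_p + H^p, and H^p \<perp> V_p, so a vector of
   H^p orthogonal to H^p is orthogonal to V_(p+1), resp. to A. *)
lemma H_nondeg:
  assumes "p \<le> w" "a \<in> H p" "\<And>b. b \<in> H p \<Longrightarrow> trq a b = 0"
  shows "a = 0"
proof (cases "p < w")
  case True
  have aV: "a \<in> V (Suc p)" "a \<in> qperp (V p)" using assms True H_less by auto
  have "trq a g = 0" if g: "g \<in> V (Suc p)" for g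
  proof -
    obtain c where c: "c \<in> V p" "g - c \<in> H p" using V_Suc_decomp[OF True g] by blast
    have "trq a g = trq a c + trq a (g - c)" by (simp add: trq_diff_right)
    with c aV assms(3) show ?thesis by (simp add: qperp_def)
  qed
  with aV nondeg_V[of "Suc p"] show ?thesis unfolding nondeg_on_def by blast
next
  case False
  with assms have aV: "p = w" "a \<in> qperp (V w)" using H_top by auto
  have "trq a g = 0" for g
  proof -
    obtain c where c: "c \<in> V w" "g - c \<in> H w" using V_top_decomp by blast
    have "trq a g = trq a c + trq a (g - c)" by (simp add: trq_diff_right)
    with c aV assms(3) show ?thesis by (simp add: qperp_def)
  qed
  then show ?thesis by (rule trq_nondegenerate)
qed

lemma trq_sum_H:
  assumes "\<forall>r\<le>w. g r \<in> H r" "s \<le> w" "b \<in> H s"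
  shows "trq (\<Sum>r\<le>w. g r) b = trq (g s) b"
proof -
  have "trq (\<Sum>r\<le>w. g r) b = (\<Sum>r\<le>w. if r = s then trq (g s) b else 0)"
    unfolding trq_sum_left using assms H_orth[of _ s _ b] by (intro sum.cong) auto
  with assms(2) show ?thesis by simp
qed

lemma sum_H_unique:
  assumes "\<forall>r\<le>w. g r \<in> H r" "\<forall>r\<le>w. g' r \<in> H r" "(\<Sum>r\<le>w. g r) = (\<Sum>r\<le>w. g' r)" "s \<le> w"
  shows "g s = g' s"
proof -
  define d where "d r = g r - g' r" for r
  have d: "\<forall>r\<le>w. d r \<in> H r" using assms H_subspace cvs.subspace_diff unfolding d_def by blast
  have "(\<Sum>r\<le>w. d r) = 0" using assms(3) by (simp add: d_def sum_subtractf)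
  then have "d s = 0"
    using H_nondeg[OF assms(4)] trq_sum_H[OF d assms(4)] d assms(4) by simp
  then show ?thesis by (simp add: d_def)
qed

lemma proj_eqI: assumes "\<forall>r\<le>w. g r \<in> H r" "f = (\<Sum>r\<le>w. g r)" "p \<le> w" shows "pr p f = g p"
  unfolding proj_def
proof (rule the_equality)
  fix h assume "\<exists>g'. (\<forall>r\<le>w. g' r \<in> H r) \<and> f = (\<Sum>r\<le>w. g' r) \<and> h = g' p"
  then show "h = g p" using sum_H_unique[OF assms(1), of _ p] assms by metis
qed (use assms in blast)

lemma proj_in_H: "p \<le> w \<Longrightarrow> pr p f \<in> H p"
  using sum_H_exists[of f] proj_eqI by metis

lemma sum_proj: "(\<Sum>r\<le>w. pr r f) = f"
proof -
  obtain g where g: "\<forall>r. g r \<in> H r" "f = (\<Sum>r\<le>w. g r)" using sum_H_exists by blast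
  then have "(\<Sum>r\<le>w. pr r f) = (\<Sum>r\<le>w. g r)" using proj_eqI by (intro sum.cong) auto
  with g show ?thesis by simp
qed

lemma proj_add: "p \<le> w \<Longrightarrow> pr p (f1 + f2) = pr p f1 + pr p f2"
  using cvs.subspace_add[OF H_subspace] proj_in_H
  by (intro proj_eqI[where g = "\<lambda>r. pr r f1 + pr r f2"]) (auto simp: sum.distrib sum_proj)

lemma proj_cscale: "p \<le> w \<Longrightarrow> pr p (cscale c f) = cscale c (pr p f)"
  using cvs.subspace_scale[OF H_subspace] proj_in_H
  by (intro proj_eqI[where g = "\<lambda>r. cscale c (pr r f)"])
    (auto simp: cvs.scale_sum_right[symmetric] sum_proj)

lemma proj_zero: "p \<le> w \<Longrightarrow> pr p 0 = 0"
  using proj_cscale[of p 0 0] by simp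

lemma proj_sum: "p \<le> w \<Longrightarrow> pr p (\<Sum>a\<in>A. F a) = (\<Sum>a\<in>A. pr p (F a))"
  by (induction A rule: infinite_finite_induct) (auto simp: proj_zero proj_add)

lemma proj_H: "q \<le> w \<Longrightarrow> p \<le> w \<Longrightarrow> h \<in> H q \<Longrightarrow> pr p h = (if p = q then h else 0)"
  using zero_in_H by (intro proj_eqI[where g = "\<lambda>r. if r = q then h else 0"]) auto

lemma trq_proj: "p \<le> w \<Longrightarrow> h \<in> H p \<Longrightarrow> trq f h = trq (pr p f) h"
  using trq_sum_H[of "\<lambda>r. pr r f" p h] sum_proj[of f] proj_in_H by simp

lemma proj_V_eq_0: assumes "f \<in> V k" "k \<le> p" "p \<le> w" shows "pr p f = 0"
proof (rule H_nondeg[OF assms(3) proj_in_H[OF assms(3)]])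
  fix h assume h: "h \<in> H p"
  have "f \<in> V p" using assms V_mono by blast
  moreover have "h \<in> qperp (V p)" using h H_orth_V assms by blast
  ultimately have "trq f h = 0" by (simp add: qperp_def trq_sym)
  then show "trq (pr p f) h = 0" using trq_proj[OF assms(3) h] by simp
qed

lemma proj_qperp_eq_0: assumes "f \<in> qperp (V j)" "p < j" "p < w" shows "pr p f = 0"
proof (rule H_nondeg[OF _ proj_in_H])
  fix h assume h: "h \<in> H p"
  then have "h \<in> V j" using H_subset_V_Suc[OF assms(3)] V_mono[of "Suc p" j] assms by auto
  then have "trq f h = 0" using assms by (simp add: qperp_def)
  then show "trq (pr p f) h = 0" using trq_proj[of p h f] h assms by simp
qed (use assms in auto)

lemma sum_proj_less_top: assumes "g \<in> V w" shows "(\<Sum>r<w. pr r g) = g"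
  using sum_proj[of g] proj_V_eq_0[OF assms order_refl order_refl]
  by (simp add: lessThan_Suc_atMost[symmetric])

section \<open>Multiplication by V_1 is tridiagonal\<close>

lemma mult_V_top: "t \<in> V1 \<Longrightarrow> g \<in> V w \<Longrightarrow> t * g \<in> V w"
  using mult_in_Vk_Suc[of t V1 g w] V_stable[of "Suc w"] by simp

lemma proj_mult_H_outside_band:
  assumes t: "t \<in> V1" and r: "r < w" and g: "g \<in> H r"
    and q: "q \<le> w" and band: "\<not> (q \<le> Suc r \<and> r \<le> Suc q)"
  shows "pr q (t * g) = 0"
proof (cases "Suc (Suc r) \<le> q")
  case True
  have "t * g \<in> V (Suc (Suc r))" using g H_subset_V_Suc[OF r] mult_in_Vk_Suc[OF t] by blast
  with True q show ?thesis using proj_V_eq_0 by blast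
next
  case False
  with band have q_less: "Suc (Suc q) \<le> r" by linarith
  have "t * g \<in> qperp (V (r - 1))"
    unfolding qperp_def
  proof (intro CollectI ballI)
    fix h assume "h \<in> V (r - 1)"
    then have "t * h \<in> V r" using mult_in_Vk_Suc[OF t, of h "r - 1"] q_less by simp
    moreover have "g \<in> qperp (V r)" using g H_orth_V[of r] r by auto
    ultimately have "trq g (t * h) = 0" by (simp add: qperp_def)
    then show "trq (t * g) h = 0" by (simp add: trq_mult_left)
  qed
  with q_less r show ?thesis using proj_qperp_eq_0 by simp
qed

definition Dblock :: "complex \<Rightarrow> (nat \<Rightarrow> complex) \<Rightarrow> (nat \<Rightarrow> complex) \<Rightarrow> ('z \<Rightarrow> complex)
    \<Rightarrow> ('z \<Rightarrow> complex) \<Rightarrow> 'z \<Rightarrow> complex" where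
  "Dblock z x y t f = (\<Sum>q<w. \<Sum>p<w. cscale (tridiag_coeff z x y q p) (pr q (t * pr p f)))"

lemma Dzxy_eq_Dblock: "Dzxy V1 z x y t f = Dblock z x y t f"
proof -
  define P where "P q p = pr q (t * pr p f)" for q p
  have split: "cscale (tridiag_coeff z x y q p) (P q p) =
      (if q = p then cscale z (P q p) else 0) + (if q = Suc p then cscale (x p) (P q p) else 0)
      + (if p = Suc q then cscale (y q) (P q p) else 0)" for q p
    by (simp add: tridiag_coeff_def)
  have "Dblock z x y t f = (\<Sum>q<w. \<Sum>p<w. if q = p then cscale z (P q p) else 0)
      + (\<Sum>p<w. \<Sum>q<w. if q = Suc p then cscale (x p) (P q p) else 0)
      + (\<Sum>q<w. \<Sum>p<w. if p = Suc q then cscale (y q) (P q p) else 0)"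
    unfolding Dblock_def P_def[symmetric] split by (simp add: sum.distrib sum.swap[of _ "{..<w}"])
  also have "\<dots> = cscale z (D0 V1 t f) + (\<Sum>p<w - 1. cscale (x p) (Dplus V1 p t f))
      + (\<Sum>p<w - 1. cscale (y p) (Dminus V1 (Suc p) t f))"
    by (simp add: D0_def Dplus_def Dminus_def P_def cvs.scale_sum_right sum_lessThan_if_Suc_less)
  finally show ?thesis unfolding Dzxy_def by (rule sym)
qed

lemma proj_Dblock:
  assumes "r < w"
  shows "pr r (Dblock z x y t f) = (\<Sum>p<w. cscale (tridiag_coeff z x y r p) (pr r (t * pr p f)))"
proof -
  have "pr r (Dblock z x y t f) =
      (\<Sum>q<w. \<Sum>p<w. cscale (tridiag_coeff z x y q p) (pr r (pr q (t * pr p f))))"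
    using assms by (simp add: Dblock_def proj_sum proj_cscale)
  also have "\<dots> = (\<Sum>q<w. if q = r then
      (\<Sum>p<w. cscale (tridiag_coeff z x y q p) (pr q (t * pr p f))) else 0)"
    using assms proj_H[of _ r, OF _ _ proj_in_H] by (intro sum.cong) auto
  finally show ?thesis using assms by simp
qed

lemma proj_mult_proj_mult_outside_band:
  assumes t: "t \<in> V1" and t': "t' \<in> V1" and "q < w" "r < w" "p < w"
    and band: "\<not> (q \<le> Suc r \<and> r \<le> Suc q \<and> p \<le> Suc r \<and> r \<le> Suc p)"
  shows "pr q (t * pr r (t' * pr p f)) = 0"
proof (cases "p \<le> Suc r \<and> r \<le> Suc p")
  case False
  have "pr r (t' * pr p f) = 0"
    using proj_mult_H_outside_band[where q = r, OF t' \<open>p < w\<close> proj_in_H[of p f]] assms False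
    by auto
  then show ?thesis using assms by (simp add: proj_zero)
next
  case True
  then show ?thesis
    using proj_mult_H_outside_band[where q = q, OF t \<open>r < w\<close> proj_in_H[of r "t' * pr p f"]] assms
    by simp
qed

(* Only the paths q \<leftarrow> r \<leftarrow> p inside the band contribute, and on those the weight does not depend
   on r; the remaining sum over r reassembles t * (t' * pr p f), which lies in V_w. *)
lemma Dblock_comp:
  assumes t: "t \<in> V1" and t': "t' \<in> V1" and hat: "\<forall>p < w - 1. x p * y p = z ^ 2"
  shows "Dblock z x y t (Dblock z x y t' f) =
    (\<Sum>q<w. \<Sum>p<w. cscale (two_step_coeff z x y q p) (pr q (t * (t' * pr p f))))"
proof -
  define T where "T q r p = pr q (t * pr r (t' * pr p f))" for q r p
  have weight: "cscale (tridiag_coeff z x y q r * tridiag_coeff z x y r p) (T q r p) =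
      cscale (two_step_coeff z x y q p) (T q r p)" if "q < w" "r < w" "p < w" for q r p
  proof (cases "q \<le> Suc r \<and> r \<le> Suc q \<and> p \<le> Suc r \<and> r \<le> Suc p")
    case True
    then show ?thesis using tridiag_coeff_path_indep[OF hat that] by simp
  next
    case False
    then have "T q r p = 0" unfolding T_def by (rule proj_mult_proj_mult_outside_band[OF t t' that])
    then show ?thesis by simp
  qed
  have reassemble: "(\<Sum>r<w. T q r p) = pr q (t * (t' * pr p f))" if "q < w" "p < w" for q p
  proof -
    have "pr p f \<in> V w" using H_subset_V_top[of p] proj_in_H[of p f] that by auto
    then have "t' * pr p f \<in> V w" by (rule mult_V_top[OF t'])
    with that show ?thesis
      by (simp add: T_def proj_sum[symmetric] sum_distrib_left[symmetric] sum_proj_less_top)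
  qed
  have "Dblock z x y t (Dblock z x y t' f) =
      (\<Sum>q<w. \<Sum>r<w. \<Sum>p<w. cscale (tridiag_coeff z x y q r * tridiag_coeff z x y r p) (T q r p))"
    unfolding Dblock_def[of z x y t] T_def
    by (intro sum.cong refl) (simp add: proj_Dblock sum_distrib_left mult_cscale proj_sum
        proj_cscale cvs.scale_sum_right)
  also have "\<dots> =
      (\<Sum>q<w. \<Sum>p<w. \<Sum>r<w. cscale (tridiag_coeff z x y q r * tridiag_coeff z x y r p) (T q r p))"
    by (intro sum.cong refl sum.swap)
  also have "\<dots> = (\<Sum>q<w. \<Sum>p<w. cscale (two_step_coeff z x y q p) (\<Sum>r<w. T q r p))"
    by (intro sum.cong refl) (simp add: weight cvs.scale_sum_right)
  also have "\<dots> = (\<Sum>q<w. \<Sum>p<w. cscale (two_step_coeff z x y q p) (pr q (t * (t' * pr p f))))"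
    by (intro sum.cong refl) (simp add: reassemble)
  finally show ?thesis .
qed

end

theorem mainTheorem9:
  fixes V1 :: "('z::finite \<Rightarrow> complex) set"
    and z :: complex and x y :: "nat \<Rightarrow> complex"
  assumes subsp: "module.subspace cscale V1"
    and one: "1 \<in> V1"
    and pol: "polarizing V1"
    and w2: "wdeg V1 \<ge> 2"
    and hat: "\<forall>p < wdeg V1 - 1. x p * y p = z ^ 2"
  shows "\<forall>t\<in>Hp V1 0. \<forall>t'\<in>Hp V1 0. \<forall>f\<in>Vk V1 (wdeg V1).
           Dzxy V1 z x y t (Dzxy V1 z x y t' f) = Dzxy V1 z x y t' (Dzxy V1 z x y t f)"
proof (intro ballI)
  interpret polarized V1 using subsp one pol by unfold_locales
  fix t t' f assume "t \<in> Hp V1 0" "t' \<in> Hp V1 0"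
  then have t: "t \<in> V1" and t': "t' \<in> V1" using H0_eq_V1 by auto
  have "Dzxy V1 z x y t (Dzxy V1 z x y t' f) = (\<Sum>q<wdeg V1. \<Sum>p<wdeg V1.
      cscale (two_step_coeff z x y q p) (proj V1 q (t * (t' * proj V1 p f))))"
    unfolding Dzxy_eq_Dblock by (rule Dblock_comp[OF t t' hat])
  also have "\<dots> = Dzxy V1 z x y t' (Dzxy V1 z x y t f)"
    unfolding Dzxy_eq_Dblock Dblock_comp[OF t' t hat] by (simp only: mult.left_commute)
  finally show "Dzxy V1 z x y t (Dzxy V1 z x y t' f) = Dzxy V1 z x y t' (Dzxy V1 z x y t f)" .
qed

end
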